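(* Let $G=(V,E)$ be a plane graph that is reduced with respect to Rules 1 and 2, let $D$ be a dominating set of $G$, and let $\mathcal R$ be a maximal $D$-region decomposition of $G$. If $v\in D$ and $u\in N_1(v)$, then $u\in V(\mathcal R)$.
   Context: A plane graph is a planar graph together with a fixed planar embedding. $N(v)$ is the open neighborhood, $N[v]=N(v)\cup\{v\}$, $N(v,w)=N(v)\cup N(w)$, $N[v,w]=N[v]\cup N[w]$, and $N_1(v)=\{u\in N(v):N(u)\setminus N[v]\ne\emptyset\}$. Region: for vertices $v,w$ of a plane graph $G$, a region $R(v,w)$ between $v$ and $w$ is a closed subset of the plane such that (1) its boundary is formed by two simple paths $P_1,P_2$ of $G$ from $v$ to $w$, each of length at most three (the paths may coincide, giving a degenerate region consisting of a single path), and (2) every vertex lying strictly inside $R(v,w)$ belongs to $N(v,w)$. $V(R)$ is the set of vertices lying inside or on the boundary of $R$. $D$-region decomposition: for $D\subseteq V$, a set $\mathcal R$ of regions, each between two vertices of $D$, such that (1) for each $R(v,w)\in\mathcal R$, no vertex of $D$ other than $v,w$ lies in $V(R(v,w))$, and (2) no two regions of $\mathcal R$ intersect except possibly along common boundary. $V(\mathcal R)=\bigcup_{R\in\mathcal R}V(R)$. $\mathcal R$ is maximal if there is no region $R\notin\mathcal R$ such that $\mathcal R\cup\{R\}$ is a $D$-region decomposition with $V(\mathcal R)\subsetneq V(\mathcal R\cup\{R\})$. Reduced: with $N_2(v)=\{u\in N(v)\setminus N_1(v):N(u)\cap N_1(v)\ne\emptyset\}$, $N_3(v)=N(v)\setminus(N_1(v)\cup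 N_2(v))$, and analogously $N_1(v,w),N_2(v,w),N_3(v,w)$ with $N(v,w),N[v,w]$ in place of $N(v),N[v]$: Rule 1 (when $N_3(v)\ne\emptyset$) removes $N_2(v)\cup N_3(v)$ and attaches a new pendant vertex to $v$; Rule 2 (for $v\ne w$ with $N_3(v,w)\ne\emptyset$ not dominated by a single vertex of $N_2(v,w)\cup N_3(v,w)$) in case $N_3(v,w)\subseteq N(v)\cap N(w)$ removes $N_3(v,w)$ and $N_2(v,w)\cap N(v)\cap N(w)$ and adds two new vertices each adjacent to exactly $v$ and $w$; in case $N_3(v,w)\subseteq N(v)$, $\not\subseteq N(w)$ removes $N_3(v,w)$ and $N_2(v,w)\cap N(v)$ and attaches a new pendant vertex to $v$ (symmetrically with $v,w$ exchanged); otherwise removes $N_3(v,w)\cup N_2(v,w)$ and attaches new pendant vertices to both $v$ and $w$. $G$ is reduced if no application of either rule changes $G$ up to isomorphism. *)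

theory Defs
  imports "HOL-Analysis.Analysis"
begin

definition simple_graph :: "'a set \<Rightarrow> ('a \<Rightarrow> 'a \<Rightarrow> bool) \<Rightarrow> bool" where
  "simple_graph V E \<longleftrightarrow> finite V \<and> (\<forall>u v. E u v \<longrightarrow> u \<in> V \<and> v \<in> V \<and> u \<noteq> v \<and> E v u)"

definition nb :: "'a set \<Rightarrow> ('a \<Rightarrow> 'a \<Rightarrow> bool) \<Rightarrow> 'a \<Rightarrow> 'a set" where
  "nb V E v = {u \<in> V. E v u}"

definition cnb :: "'a set \<Rightarrow> ('a \<Rightarrow> 'a \<Rightarrow> bool) \<Rightarrow> 'a \<Rightarrow> 'a set" where
  "cnb V E v = insert v (nb V E v)"

definition nb2 :: "'a set \<Rightarrow> ('a \<Rightarrow> 'a \<Rightarrow> bool) \<Rightarrow> 'a \<Rightarrow> 'a \<Rightarrow> 'a set" where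
  "nb2 V E v w = nb V E v \<union> nb V E w"

definition cnb2 :: "'a set \<Rightarrow> ('a \<Rightarrow> 'a \<Rightarrow> bool) \<Rightarrow> 'a \<Rightarrow> 'a \<Rightarrow> 'a set" where
  "cnb2 V E v w = cnb V E v \<union> cnb V E w"

definition N1 :: "'a set \<Rightarrow> ('a \<Rightarrow> 'a \<Rightarrow> bool) \<Rightarrow> 'a \<Rightarrow> 'a set" where
  "N1 V E v = {u \<in> nb V E v. nb V E u - cnb V E v \<noteq> {}}"

definition N2 :: "'a set \<Rightarrow> ('a \<Rightarrow> 'a \<Rightarrow> bool) \<Rightarrow> 'a \<Rightarrow> 'a set" where
  "N2 V E v = {u \<in> nb V E v - N1 V E v. nb V E u \<inter> N1 V E v \<noteq> {}}"

definition N3 :: "'a set \<Rightarrow> ('a \<Rightarrow> 'a \<Rightarrow> bool) \<Rightarrow> 'a \<Rightarrow> 'a set" where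
  "N3 V E v = nb V E v - (N1 V E v \<union> N2 V E v)"

definition N1p :: "'a set \<Rightarrow> ('a \<Rightarrow> 'a \<Rightarrow> bool) \<Rightarrow> 'a \<Rightarrow> 'a \<Rightarrow> 'a set" where
  "N1p V E v w = {u \<in> nb2 V E v w. nb V E u - cnb2 V E v w \<noteq> {}}"

definition N2p :: "'a set \<Rightarrow> ('a \<Rightarrow> 'a \<Rightarrow> bool) \<Rightarrow> 'a \<Rightarrow> 'a \<Rightarrow> 'a set" where
  "N2p V E v w = {u \<in> nb2 V E v w - N1p V E v w. nb V E u \<inter> N1p V E v w \<noteq> {}}"

definition N3p :: "'a set \<Rightarrow> ('a \<Rightarrow> 'a \<Rightarrow> bool) \<Rightarrow> 'a \<Rightarrow> 'a \<Rightarrow> 'a set" where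
  "N3p V E v w = nb2 V E v w - (N1p V E v w \<union> N2p V E v w)"

definition dominating_set :: "'a set \<Rightarrow> ('a \<Rightarrow> 'a \<Rightarrow> bool) \<Rightarrow> 'a set \<Rightarrow> bool" where
  "dominating_set V E D \<longleftrightarrow> D \<subseteq> V \<and> (\<forall>x \<in> V. x \<in> D \<or> (\<exists>d \<in> D. E d x))"

text \<open>Graph obtained from (V,E) by deleting the vertex set S and adding k fresh vertices
  Inr 0, ..., Inr (k-1), where fresh vertex Inr i is adjacent exactly to the (surviving)
  vertices of A i.\<close>
definition modV :: "'a set \<Rightarrow> 'a set \<Rightarrow> nat \<Rightarrow> ('a + nat) set" where
  "modV V S k = Inl ` (V - S) \<union> Inr ` {..<k}"

definition modE :: "'a set \<Rightarrow> ('a \<Rightarrow> 'a \<Rightarrow> bool) \<Rightarrow> 'a set \<Rightarrow> (nat \<Rightarrow> 'a set) \<Rightarrow> nat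
    \<Rightarrow> ('a + nat) \<Rightarrow> ('a + nat) \<Rightarrow> bool" where
  "modE V E S A k x y =
     (case (x, y) of
        (Inl a, Inl b) \<Rightarrow> E a b \<and> a \<in> V - S \<and> b \<in> V - S
      | (Inl a, Inr i) \<Rightarrow> i < k \<and> a \<in> V - S \<and> a \<in> A i
      | (Inr i, Inl a) \<Rightarrow> i < k \<and> a \<in> V - S \<and> a \<in> A i
      | (Inr i, Inr j) \<Rightarrow> False)"

definition graph_iso :: "'a set \<Rightarrow> ('a \<Rightarrow> 'a \<Rightarrow> bool) \<Rightarrow> 'b set \<Rightarrow> ('b \<Rightarrow> 'b \<Rightarrow> bool) \<Rightarrow> bool" where
  "graph_iso V E V' E' \<longleftrightarrow>
     (\<exists>f. bij_betw f V V' \<and> (\<forall>x \<in> V. \<forall>y \<in> V. E x y \<longleftrightarrow> E' (f x) (f y)))"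

text \<open>Rule 1 applicable at v and changing the graph (up to isomorphism).\<close>
definition rule1_changes :: "'a set \<Rightarrow> ('a \<Rightarrow> 'a \<Rightarrow> bool) \<Rightarrow> 'a \<Rightarrow> bool" where
  "rule1_changes V E v \<longleftrightarrow> v \<in> V \<and> N3 V E v \<noteq> {} \<and>
     (let S = N2 V E v \<union> N3 V E v; A = (\<lambda>i. {v}) in
       \<not> graph_iso V E (modV V S 1) (modE V E S A 1))"

text \<open>Result of Rule 2 at (v,w): (removed set, attachment sets of new vertices, number of new vertices).\<close>
definition rule2_data :: "'a set \<Rightarrow> ('a \<Rightarrow> 'a \<Rightarrow> bool) \<Rightarrow> 'a \<Rightarrow> 'a \<Rightarrow> 'a set \<times> (nat \<Rightarrow> 'a set) \<times> nat" where
  "rule2_data V E v w =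
     (let N3' = N3p V E v w; N2' = N2p V E v w; Nv = nb V E v; Nw = nb V E w in
      if N3' \<subseteq> Nv \<inter> Nw then (N3' \<union> (N2' \<inter> Nv \<inter> Nw), (\<lambda>i. {v, w}), 2)
      else if N3' \<subseteq> Nv then (N3' \<union> (N2' \<inter> Nv), (\<lambda>i. {v}), 1)
      else if N3' \<subseteq> Nw then (N3' \<union> (N2' \<inter> Nw), (\<lambda>i. {w}), 1)
      else (N3' \<union> N2', (\<lambda>i. if i = 0 then {v} else {w}), 2))"

definition rule2_changes :: "'a set \<Rightarrow> ('a \<Rightarrow> 'a \<Rightarrow> bool) \<Rightarrow> 'a \<Rightarrow> 'a \<Rightarrow> bool" where
  "rule2_changes V E v w \<longleftrightarrow> v \<in> V \<and> w \<in> V \<and> v \<noteq> w \<and> N3p V E v w \<noteq> {} \<and>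
     \<not> (\<exists>z \<in> N2p V E v w \<union> N3p V E v w. N3p V E v w \<subseteq> cnb V E z) \<and>
     (case rule2_data V E v w of (S, A, k) \<Rightarrow>
        \<not> graph_iso V E (modV V S k) (modE V E S A k))"

definition reduced :: "'a set \<Rightarrow> ('a \<Rightarrow> 'a \<Rightarrow> bool) \<Rightarrow> bool" where
  "reduced V E \<longleftrightarrow> (\<forall>v. \<not> rule1_changes V E v) \<and> (\<forall>v w. \<not> rule2_changes V E v w)"

definition plane_embedding :: "'a set \<Rightarrow> ('a \<Rightarrow> 'a \<Rightarrow> bool) \<Rightarrow> ('a \<Rightarrow> complex)
    \<Rightarrow> ('a \<Rightarrow> 'a \<Rightarrow> real \<Rightarrow> complex) \<Rightarrow> bool" where
  "plane_embedding V E pos crv \<longleftrightarrow>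
     inj_on pos V \<and>
     (\<forall>u v. E u v \<longrightarrow> arc (crv u v) \<and> pathstart (crv u v) = pos u \<and> pathfinish (crv u v) = pos v
        \<and> path_image (crv v u) = path_image (crv u v)) \<and>
     (\<forall>u v x. E u v \<and> x \<in> V \<and> pos x \<in> path_image (crv u v) \<longrightarrow> x = u \<or> x = v) \<and>
     (\<forall>u v u' v'. E u v \<and> E u' v' \<and> {u, v} \<noteq> {u', v'} \<longrightarrow>
        path_image (crv u v) \<inter> path_image (crv u' v') \<subseteq> pos ` ({u, v} \<inter> {u', v'}))"

definition plane_graph :: "'a set \<Rightarrow> ('a \<Rightarrow> 'a \<Rightarrow> bool) \<Rightarrow> ('a \<Rightarrow> complex)
    \<Rightarrow> ('a \<Rightarrow> 'a \<Rightarrow> real \<Rightarrow> complex) \<Rightarrow> bool" where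
  "plane_graph V E pos crv \<longleftrightarrow> simple_graph V E \<and> plane_embedding V E pos crv"

text \<open>Simple path in G from v to w (as vertex list) with at most three edges.\<close>
definition short_path :: "'a set \<Rightarrow> ('a \<Rightarrow> 'a \<Rightarrow> bool) \<Rightarrow> 'a \<Rightarrow> 'a \<Rightarrow> 'a list \<Rightarrow> bool" where
  "short_path V E v w P \<longleftrightarrow> P \<noteq> [] \<and> hd P = v \<and> last P = w \<and> distinct P \<and> set P \<subseteq> V
     \<and> length P \<le> 4 \<and> (\<forall>i. Suc i < length P \<longrightarrow> E (P ! i) (P ! Suc i))"

definition path_pts :: "('a \<Rightarrow> complex) \<Rightarrow> ('a \<Rightarrow> 'a \<Rightarrow> real \<Rightarrow> complex) \<Rightarrow> 'a list \<Rightarrow> complex set" where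
  "path_pts pos crv P = pos ` set P \<union> (\<Union>i \<in> {i. Suc i < length P}. path_image (crv (P ! i) (P ! Suc i)))"

definition is_region :: "'a set \<Rightarrow> ('a \<Rightarrow> 'a \<Rightarrow> bool) \<Rightarrow> ('a \<Rightarrow> complex)
    \<Rightarrow> ('a \<Rightarrow> 'a \<Rightarrow> real \<Rightarrow> complex) \<Rightarrow> 'a \<Rightarrow> 'a \<Rightarrow> complex set \<Rightarrow> bool" where
  "is_region V E pos crv v w R \<longleftrightarrow>
     v \<in> V \<and> w \<in> V \<and> v \<noteq> w \<and> closed R \<and>
     (\<exists>P1 P2. short_path V E v w P1 \<and> short_path V E v w P2 \<and>
        frontier R = path_pts pos crv P1 \<union> path_pts pos crv P2) \<and>
     (\<forall>x \<in> V. pos x \<in> interior R \<longrightarrow> x \<in> nb2 V E v w)"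

definition reg_verts :: "'a set \<Rightarrow> ('a \<Rightarrow> complex) \<Rightarrow> complex set \<Rightarrow> 'a set" where
  "reg_verts V pos R = {x \<in> V. pos x \<in> R}"

text \<open>A region is recorded together with its two end vertices: (v, w, R).\<close>
definition region_decomp :: "'a set \<Rightarrow> ('a \<Rightarrow> 'a \<Rightarrow> bool) \<Rightarrow> ('a \<Rightarrow> complex)
    \<Rightarrow> ('a \<Rightarrow> 'a \<Rightarrow> real \<Rightarrow> complex) \<Rightarrow> 'a set \<Rightarrow> ('a \<times> 'a \<times> complex set) set \<Rightarrow> bool" where
  "region_decomp V E pos crv D \<R> \<longleftrightarrow>
     (\<forall>(v, w, R) \<in> \<R>. v \<in> D \<and> w \<in> D \<and> is_region V E pos crv v w R \<and>
        reg_verts V pos R \<inter> D \<subseteq> {v, w}) \<and>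
     (\<forall>r1 \<in> \<R>. \<forall>r2 \<in> \<R>. r1 \<noteq> r2 \<longrightarrow>
        snd (snd r1) \<inter> snd (snd r2) \<subseteq> frontier (snd (snd r1)) \<inter> frontier (snd (snd r2)))"

definition decomp_verts :: "'a set \<Rightarrow> ('a \<Rightarrow> complex) \<Rightarrow> ('a \<times> 'a \<times> complex set) set \<Rightarrow> 'a set" where
  "decomp_verts V pos \<R> = (\<Union>(v, w, R) \<in> \<R>. reg_verts V pos R)"

definition maximal_region_decomp :: "'a set \<Rightarrow> ('a \<Rightarrow> 'a \<Rightarrow> bool) \<Rightarrow> ('a \<Rightarrow> complex)
    \<Rightarrow> ('a \<Rightarrow> 'a \<Rightarrow> real \<Rightarrow> complex) \<Rightarrow> 'a set \<Rightarrow> ('a \<times> 'a \<times> complex set) set \<Rightarrow> bool" where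
  "maximal_region_decomp V E pos crv D \<R> \<longleftrightarrow>
     region_decomp V E pos crv D \<R> \<and>
     \<not> (\<exists>r. r \<notin> \<R> \<and> region_decomp V E pos crv D (insert r \<R>) \<and>
           decomp_verts V pos \<R> \<subset> decomp_verts V pos (insert r \<R>))"

end

theory Submission
  imports Defs
begin

text \<open>
  Suppose u \<in> N1(v) lies in no region, and pick a neighbour x of u outside N[v]. An edge ab
  with b outside a region R meets the frontier of R, which consists of vertices and edges of
  the graph, only in a; being an arc, it therefore never enters the interior of R. Hence the
  edges vu and ux avoid all region interiors, and so does some edge from x to D: a boundary
  edge of a region containing x (x is not an end of that region, hence adjacent to one), or
  otherwise the edge to a dominating vertex. This yields a path v, u (, x, d) of length at most
  three between two vertices of D, with no other vertex in D, meeting no region interior. By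
  invariance of domain a finite union of arcs has empty interior in the plane, so the path is a
  degenerate region that can be added to the decomposition, gaining the vertex u and
  contradicting maximality.
\<close>

lemma interior_arc_image_empty:
  fixes g :: "real \<Rightarrow> 'a::euclidean_space"
  assumes "arc g" and "DIM('a) \<ge> 2"
  shows "interior (path_image g) = {}"
proof (rule ccontr)
  assume nonempty: "interior (path_image g) \<noteq> {}"
  obtain h where "homeomorphism {0..1} (path_image g) g h"
    using homeomorphism_arc[OF \<open>arc g\<close>] by blast
  then have "continuous_on (interior (path_image g)) h" "inj_on h (interior (path_image g))"
    unfolding homeomorphism_def
    by (meson continuous_on_subset interior_subset, metis inj_on_inverseI inj_on_subset interior_subset)
  then have "DIM('a) \<le> DIM(real)"
    using invariance_of_dimension open_interior nonempty by blast
  with assms(2) show False by simp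
qed

lemma interior_Union_closed_empty:
  assumes "finite \<F>" and "\<And>S. S \<in> \<F> \<Longrightarrow> closed S \<and> interior S = {}"
  shows "interior (\<Union>\<F>) = {}"
  using assms
proof (induction \<F> rule: finite_induct)
  case (insert S \<F>)
  then have "interior (S \<union> \<Union>\<F>) = interior S"
    by (intro interior_closed_Un_empty_interior) auto
  with insert show ?case by simp
qed simp

text \<open>Otherwise the half-open arc g ` {0<..1}, which is connected and dense in the arc, would
  meet the frontier of the interior of S, away from the starting point.\<close>
lemma arc_image_Int_interior_empty:
  fixes g :: "real \<Rightarrow> 'a::topological_space"
  assumes "arc g" and "pathfinish g \<notin> S" and "path_image g \<inter> frontier S \<subseteq> {pathstart g}"
  shows "path_image g \<inter> interior S = {}"
proof (rule ccontr)
  assume meets: "path_image g \<inter> interior S \<noteq> {}"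
  define A where "A = g ` {0<..1}"
  have cont: "continuous_on {0..1} g" and inj: "inj_on g {0..1}"
    using \<open>arc g\<close> by (auto simp: arc_def path_def)
  have "connected A"
    unfolding A_def by (rule connected_continuous_image[OF continuous_on_subset[OF cont]]) auto
  have "path_image g \<subseteq> closure A"
    unfolding path_image_def A_def
    using image_closure_subset[of "{0<..1}" g "closure (g ` {0<..1})"] cont
    by (simp add: closure_subset)
  then have "interior S \<inter> closure A \<noteq> {}"
    using meets by blast
  then have "A \<inter> interior S \<noteq> {}"
    using open_Int_closure_eq_empty[OF open_interior] by blast
  moreover have "pathfinish g \<in> A"
    unfolding A_def pathfinish_def by simp
  then have "A - interior S \<noteq> {}"
    using assms(2) interior_subset by blast
  ultimately obtain p where p: "p \<in> A" "p \<in> frontier (interior S)"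
    using connected_Int_frontier[OF \<open>connected A\<close>] by blast
  then have "p \<in> path_image g \<inter> frontier S"
    using frontier_interior_subset unfolding A_def path_image_def by fastforce
  then have "p = g 0"
    using assms(3) by (auto simp: pathstart_def)
  with p(1) inj show False
    unfolding A_def by (force dest: inj_onD)
qed

lemma short_path_singleton: "a \<in> V \<Longrightarrow> short_path V E a a [a]"
  by (simp add: short_path_def)

lemma short_path_ConsI:
  assumes "short_path V E b w (b # P)" and "E a b" and "a \<in> V" and "a \<notin> set (b # P)"
    and "length P \<le> 2"
  shows "short_path V E a w (a # b # P)"
  unfolding short_path_def
proof (intro conjI allI impI)
  fix i assume "Suc i < length (a # b # P)"
  then show "E ((a # b # P) ! i) ((a # b # P) ! Suc i)"
    using assms(1,2) unfolding short_path_def by (cases i) auto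
qed (use assms in \<open>auto simp: short_path_def\<close>)

lemma path_pts_Cons_Cons:
  "path_pts pos crv (a # b # P) = insert (pos a) (path_image (crv a b) \<union> path_pts pos crv (b # P))"
proof -
  have "{i. Suc i < length (a # b # P)} = insert 0 (Suc ` {i. Suc i < length (b # P)})"
    by (auto simp: image_iff less_Suc_eq_0_disj)
  then show ?thesis
    unfolding path_pts_def by auto
qed

lemma finite_edge_indices: "finite {i. Suc i < length P}"
  by (rule finite_subset[of _ "{..<length P}"]) auto

lemma edge_image_subset_path_pts:
  "Suc i < length P \<Longrightarrow> path_image (crv (P ! i) (P ! Suc i)) \<subseteq> path_pts pos crv P"
  unfolding path_pts_def by blast

lemma region_closed: "is_region V E pos crv v w R \<Longrightarrow> closed R"
  by (simp add: is_region_def)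

lemma region_frontier_path:
  assumes "is_region V E pos crv v w R" and "p \<in> frontier R"
  obtains P where "short_path V E v w P" "p \<in> path_pts pos crv P" "path_pts pos crv P \<subseteq> frontier R"
  using assms unfolding is_region_def by blast

lemma region_decompD:
  assumes "region_decomp V E pos crv D \<R>" and "(a, b, R) \<in> \<R>"
  shows "a \<in> D" "b \<in> D" "is_region V E pos crv a b R" "reg_verts V pos R \<inter> D \<subseteq> {a, b}"
  using assms unfolding region_decomp_def by fast+

lemma region_decomp_overlap:
  assumes "region_decomp V E pos crv D \<R>" and "(a, b, R) \<in> \<R>" "(a', b', R') \<in> \<R>"
    and "(a, b, R) \<noteq> (a', b', R')"
  shows "R \<inter> R' \<subseteq> frontier R \<inter> frontier R'"
  using assms unfolding region_decomp_def by fastforce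

lemma region_decomp_insert:
  assumes "region_decomp V E pos crv D \<R>" and "v \<in> D" "w \<in> D"
    and "is_region V E pos crv v w R" and "reg_verts V pos R \<inter> D \<subseteq> {v, w}"
    and "\<And>a b R'. (a, b, R') \<in> \<R> \<Longrightarrow> R \<inter> R' \<subseteq> frontier R \<inter> frontier R'"
  shows "region_decomp V E pos crv D (insert (v, w, R) \<R>)"
proof -
  have "R \<inter> snd (snd r) \<subseteq> frontier R \<inter> frontier (snd (snd r))" if "r \<in> \<R>" for r
    using assms(6) that by (cases r) auto
  then show ?thesis
    using assms(1-5) unfolding region_decomp_def by (simp add: Int_commute)
qed

lemma frontier_Int_interior_region_decomp:
  assumes "region_decomp V E pos crv D \<R>" and "(a0, b0, R0) \<in> \<R>" "(a, b, R) \<in> \<R>"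
  shows "frontier R0 \<inter> interior R = {}"
proof -
  have disj: "frontier R \<inter> interior R = {}"
    by (simp add: frontier_def Diff_Int_distrib2)
  show ?thesis
  proof (cases "(a0, b0, R0) = (a, b, R)")
    case True
    with disj show ?thesis by simp
  next
    case False
    have "frontier R0 \<subseteq> R0"
      using region_closed[OF region_decompD(3)[OF assms(1,2)]] by (simp add: frontier_subset_closed)
    then have "frontier R0 \<inter> R \<subseteq> frontier R"
      using region_decomp_overlap[OF assms False] by blast
    with disj show ?thesis
      using interior_subset by blast
  qed
qed

locale embedded_graph =
  fixes V :: "'a set" and E :: "'a \<Rightarrow> 'a \<Rightarrow> bool"
    and pos :: "'a \<Rightarrow> complex" and crv :: "'a \<Rightarrow> 'a \<Rightarrow> real \<Rightarrow> complex"
  assumes plane_graph: "plane_graph V E pos crv"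
begin

lemma edge_sym: "E a b \<Longrightarrow> E b a"
  and edge_in_vertices: "E a b \<Longrightarrow> a \<in> V"
  and edge_neq: "E a b \<Longrightarrow> a \<noteq> b"
  using plane_graph unfolding plane_graph_def simple_graph_def by blast+

lemma arc_edge: "E a b \<Longrightarrow> arc (crv a b)"
  and pathstart_edge: "E a b \<Longrightarrow> pathstart (crv a b) = pos a"
  and pathfinish_edge: "E a b \<Longrightarrow> pathfinish (crv a b) = pos b"
  and edge_image_sym: "E a b \<Longrightarrow> path_image (crv b a) = path_image (crv a b)"
  using plane_graph unfolding plane_graph_def plane_embedding_def by blast+

lemma pos_in_edge_image:
  "E a b \<Longrightarrow> pos a \<in> path_image (crv a b)" "E a b \<Longrightarrow> pos b \<in> path_image (crv a b)"
  by (metis pathstart_edge pathstart_in_path_image, metis pathfinish_edge pathfinish_in_path_image)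

lemma inj_on_pos: "inj_on pos V"
  using plane_graph unfolding plane_graph_def plane_embedding_def by blast

lemma vertex_on_edge:
  "E a b \<Longrightarrow> x \<in> V \<Longrightarrow> pos x \<in> path_image (crv a b) \<Longrightarrow> x = a \<or> x = b"
  using plane_graph unfolding plane_graph_def plane_embedding_def by blast

lemma edges_meet_at_common_end:
  assumes "E a b" "E c e" "{a, b} \<noteq> {c, e}"
    and "p \<in> path_image (crv a b)" "p \<in> path_image (crv c e)"
  shows "p \<in> pos ` ({a, b} \<inter> {c, e})"
  using plane_graph assms unfolding plane_graph_def plane_embedding_def by blast

lemma path_pts_edge: "E a b \<Longrightarrow> path_pts pos crv [a, b] = path_image (crv a b)"
  by (auto simp: path_pts_Cons_Cons path_pts_def pos_in_edge_image)

lemma path_pts_Cons_edge: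
  "E a b \<Longrightarrow>
    path_pts pos crv (a # b # c # P) = path_image (crv a b) \<union> path_pts pos crv (b # c # P)"
  by (auto simp: path_pts_Cons_Cons pos_in_edge_image)

lemma closed_path_pts:
  assumes "short_path V E v w P"
  shows "closed (path_pts pos crv P)"
proof -
  have "closed (path_image (crv (P ! i) (P ! Suc i)))" if "Suc i < length P" for i
    using assms that by (meson arc_edge arc_imp_path closed_path_image short_path_def)
  then show ?thesis
    unfolding path_pts_def
    by (intro closed_Un closed_UN finite_imp_closed) (auto simp: finite_edge_indices)
qed

lemma interior_path_pts:
  assumes "short_path V E v w P"
  shows "interior (path_pts pos crv P) = {}"
proof -
  let ?arcs = "(\<lambda>i. path_image (crv (P ! i) (P ! Suc i))) ` {i. Suc i < length P}"
  have "interior (\<Union>?arcs) = {}"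
  proof (rule interior_Union_closed_empty)
    fix S assume "S \<in> ?arcs"
    then obtain i where "Suc i < length P" "S = path_image (crv (P ! i) (P ! Suc i))" by blast
    then show "closed S \<and> interior S = {}"
      using assms arc_edge unfolding short_path_def
      by (simp add: closed_path_image arc_imp_path interior_arc_image_empty)
  qed (simp add: finite_edge_indices)
  then have "interior (pos ` set P \<union> \<Union>?arcs) = interior (pos ` set P)"
    by (intro interior_closed_Un_empty_interior finite_imp_closed) auto
  then show ?thesis
    unfolding path_pts_def by (simp add: empty_interior_finite)
qed

lemma reg_verts_path_pts:
  assumes "short_path V E v w P"
  shows "reg_verts V pos (path_pts pos crv P) = set P"
proof
  have PV: "set P \<subseteq> V"
    using assms by (simp add: short_path_def)
  then show "set P \<subseteq> reg_verts V pos (path_pts pos crv P)"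
    unfolding reg_verts_def path_pts_def by blast
  show "reg_verts V pos (path_pts pos crv P) \<subseteq> set P"
  proof
    fix z assume "z \<in> reg_verts V pos (path_pts pos crv P)"
    then have z: "z \<in> V" "pos z \<in> path_pts pos crv P"
      by (auto simp: reg_verts_def)
    then consider "pos z \<in> pos ` set P"
      | i where "Suc i < length P" "pos z \<in> path_image (crv (P ! i) (P ! Suc i))"
      unfolding path_pts_def by blast
    then show "z \<in> set P"
    proof cases
      case 1
      with z(1) PV inj_on_pos show ?thesis by (auto dest: inj_onD)
    next
      case (2 i)
      then have "z = P ! i \<or> z = P ! Suc i"
        using assms z(1) vertex_on_edge unfolding short_path_def by blast
      with 2(1) show ?thesis by auto
    qed
  qed
qed

lemma is_region_path_pts:
  assumes "short_path V E v w P" and "v \<noteq> w"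
  shows "is_region V E pos crv v w (path_pts pos crv P)"
proof -
  have "frontier (path_pts pos crv P) = path_pts pos crv P"
    using closed_path_pts[OF assms(1)] interior_path_pts[OF assms(1)] by (simp add: frontier_def)
  moreover have "v \<in> V" "w \<in> V"
    using assms(1) unfolding short_path_def by (auto intro: hd_in_set last_in_set)
  ultimately show ?thesis
    using assms closed_path_pts[OF assms(1)] interior_path_pts[OF assms(1)]
    unfolding is_region_def by blast
qed

lemma edge_Int_path_pts:
  assumes P: "short_path V E v w P" and ab: "E a b" and b: "pos b \<notin> path_pts pos crv P"
  shows "path_image (crv a b) \<inter> path_pts pos crv P \<subseteq> {pos a}"
proof
  fix p assume p: "p \<in> path_image (crv a b) \<inter> path_pts pos crv P"
  have bP: "b \<notin> set P"
    using b by (auto simp: path_pts_def)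
  from p consider z where "z \<in> set P" "p = pos z"
    | i where "Suc i < length P" "p \<in> path_image (crv (P ! i) (P ! Suc i))"
    unfolding path_pts_def by blast
  then show "p \<in> {pos a}"
  proof cases
    case (1 z)
    then have "z = a \<or> z = b"
      using P ab p vertex_on_edge unfolding short_path_def by blast
    with 1 bP show ?thesis by auto
  next
    case (2 i)
    then have "b \<notin> {P ! i, P ! Suc i}"
      using bP by auto
    then have "p \<in> pos ` ({a, b} \<inter> {P ! i, P ! Suc i})"
      using 2 P ab p edges_meet_at_common_end[of a b "P ! i" "P ! Suc i" p]
      unfolding short_path_def by blast
    with \<open>b \<notin> {P ! i, P ! Suc i}\<close> show ?thesis by auto
  qed
qed

lemma edge_Int_frontier_region:
  assumes R: "is_region V E pos crv v w R" and ab: "E a b" and b: "pos b \<notin> R"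
  shows "path_image (crv a b) \<inter> frontier R \<subseteq> {pos a}"
proof
  fix p assume p: "p \<in> path_image (crv a b) \<inter> frontier R"
  then obtain P where P: "short_path V E v w P" "p \<in> path_pts pos crv P"
    "path_pts pos crv P \<subseteq> frontier R"
    using region_frontier_path[OF R] by blast
  have "frontier R \<subseteq> R"
    using region_closed[OF R] by (simp add: frontier_subset_closed)
  with P(3) b have "pos b \<notin> path_pts pos crv P" by blast
  with p P(2) show "p \<in> {pos a}"
    using edge_Int_path_pts[OF P(1) ab] by blast
qed

lemma edge_Int_interior_region:
  assumes "is_region V E pos crv v w R" and "E a b" and "pos b \<notin> R"
  shows "path_image (crv a b) \<inter> interior R = {}"
  using assms edge_Int_frontier_region[OF assms]
  by (intro arc_image_Int_interior_empty) (simp_all add: arc_edge pathstart_edge pathfinish_edge)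

lemma inner_vertex_edge_to_end:
  assumes P: "short_path V E v w P" and "x \<in> set P" "x \<noteq> v" "x \<noteq> w"
  obtains d where "d = v \<or> d = w" "E x d" "path_image (crv x d) \<subseteq> path_pts pos crv P"
proof -
  obtain j where j: "j < length P" "P ! j = x"
    using assms(2) by (meson in_set_conv_nth)
  have "P ! 0 = v" "P ! (length P - 1) = w" "length P \<le> 4"
    using P unfolding short_path_def by (auto simp: hd_conv_nth last_conv_nth)
  with j assms(3,4) have "j = 1 \<or> (j = 2 \<and> length P = 4)"
    by (cases "j = 0"; cases "j = length P - 1") auto
  then show thesis
  proof
    assume "j = 1"
    then have "E v x" "path_image (crv v x) \<subseteq> path_pts pos crv P"
      using P j \<open>P ! 0 = v\<close> edge_image_subset_path_pts[of 0 P crv pos]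
      unfolding short_path_def by auto
    then show thesis
      using that edge_sym edge_image_sym by metis
  next
    assume "j = 2 \<and> length P = 4"
    then have "E x w" "path_image (crv x w) \<subseteq> path_pts pos crv P"
      using P j \<open>P ! (length P - 1) = w\<close> edge_image_subset_path_pts[of 2 P crv pos]
      unfolding short_path_def by (auto dest: spec[of _ 2])
    then show thesis
      using that by blast
  qed
qed

text \<open>Such a path is itself a degenerate region, which maximality forbids adding.\<close>
lemma short_path_subset_decomp_verts:
  assumes max: "maximal_region_decomp V E pos crv D \<R>"
    and P: "short_path V E v w P" and "v \<in> D" "w \<in> D" "v \<noteq> w" and PD: "set P \<inter> D \<subseteq> {v, w}"
    and avoid: "\<And>a b R. (a, b, R) \<in> \<R> \<Longrightarrow> path_pts pos crv P \<inter> interior R = {}"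
  shows "set P \<subseteq> decomp_verts V pos \<R>"
proof (rule ccontr)
  assume not_covered: "\<not> set P \<subseteq> decomp_verts V pos \<R>"
  define Rp where "Rp = path_pts pos crv P"
  have rd: "region_decomp V E pos crv D \<R>"
    using max by (simp add: maximal_region_decomp_def)
  have frontier_Rp: "frontier Rp = Rp"
    using closed_path_pts[OF P] interior_path_pts[OF P] by (simp add: Rp_def frontier_def)
  have "Rp \<inter> R \<subseteq> frontier Rp \<inter> frontier R" if "(a, b, R) \<in> \<R>" for a b R
  proof -
    have "R - interior R = frontier R"
      using region_closed[OF region_decompD(3)[OF rd that]] by (simp add: frontier_def)
    with avoid[OF that] frontier_Rp show ?thesis
      unfolding Rp_def by blast
  qed
  then have "region_decomp V E pos crv D (insert (v, w, Rp) \<R>)"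
    using region_decomp_insert[OF rd \<open>v \<in> D\<close> \<open>w \<in> D\<close>] is_region_path_pts[OF P \<open>v \<noteq> w\<close>]
      reg_verts_path_pts[OF P] PD
    unfolding Rp_def by blast
  moreover have "set P \<subseteq> decomp_verts V pos (insert (v, w, Rp) \<R>)"
    using reg_verts_path_pts[OF P] unfolding decomp_verts_def Rp_def by auto
  then have "(v, w, Rp) \<notin> \<R>" "decomp_verts V pos \<R> \<subset> decomp_verts V pos (insert (v, w, Rp) \<R>)"
    using not_covered unfolding decomp_verts_def by auto
  ultimately show False
    using max unfolding maximal_region_decomp_def by blast
qed

text \<open>Either a boundary edge of a region containing x, or else an edge to a dominating vertex.\<close>
lemma edge_to_dominating_set_avoiding_regions:
  assumes rd: "region_decomp V E pos crv D \<R>" and dom: "dominating_set V E D"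
    and x: "x \<in> V" "x \<notin> D" and outside: "\<And>a b R. (a, b, R) \<in> \<R> \<Longrightarrow> pos x \<notin> interior R"
  obtains d where "d \<in> D" "E x d"
    "\<And>a b R. (a, b, R) \<in> \<R> \<Longrightarrow> path_image (crv x d) \<inter> interior R = {}"
proof (cases "x \<in> decomp_verts V pos \<R>")
  case True
  then obtain a0 b0 R0 where r0: "(a0, b0, R0) \<in> \<R>" "pos x \<in> R0"
    unfolding decomp_verts_def reg_verts_def by auto
  note reg0 = region_decompD(3)[OF rd r0(1)]
  have "pos x \<in> frontier R0"
    using r0 outside region_closed[OF reg0] by (simp add: frontier_def)
  then obtain P where P: "short_path V E a0 b0 P" "pos x \<in> path_pts pos crv P"
    "path_pts pos crv P \<subseteq> frontier R0"
    using region_frontier_path[OF reg0] by blast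
  have "x \<in> set P"
    using P(2) x(1) reg_verts_path_pts[OF P(1)] unfolding reg_verts_def by blast
  moreover have "x \<noteq> a0" "x \<noteq> b0"
    using region_decompD(1,2)[OF rd r0(1)] x(2) by auto
  ultimately obtain d where d: "d = a0 \<or> d = b0" "E x d" "path_image (crv x d) \<subseteq> path_pts pos crv P"
    using inner_vertex_edge_to_end[OF P(1)] by blast
  show thesis
  proof (rule that)
    show "d \<in> D"
      using d(1) region_decompD(1,2)[OF rd r0(1)] by blast
    show "path_image (crv x d) \<inter> interior R = {}" if "(a, b, R) \<in> \<R>" for a b R
      using d(3) P(3) frontier_Int_interior_region_decomp[OF rd r0(1) that] by blast
  qed (fact d(2))
next
  case False
  obtain d where "d \<in> D" "E d x"
    using dom x unfolding dominating_set_def by blast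
  show thesis
  proof (rule that)
    show "path_image (crv x d) \<inter> interior R = {}" if "(a, b, R) \<in> \<R>" for a b R
    proof -
      have "pos x \<notin> R"
        using False x(1) that unfolding decomp_verts_def reg_verts_def by blast
      with edge_Int_interior_region[OF region_decompD(3)[OF rd that] \<open>E d x\<close>] show ?thesis
        by (simp add: edge_image_sym[OF \<open>E d x\<close>])
    qed
  qed (use \<open>d \<in> D\<close> \<open>E d x\<close> edge_sym in auto)
qed

lemma N1_vertex_on_avoiding_short_path:
  assumes rd: "region_decomp V E pos crv D \<R>" and dom: "dominating_set V E D"
    and "v \<in> D" and "u \<in> N1 V E v" and u_out: "\<And>a b R. (a, b, R) \<in> \<R> \<Longrightarrow> pos u \<notin> R"
  obtains w P where "short_path V E v w P" "w \<in> D" "v \<noteq> w" "set P \<inter> D \<subseteq> {v, w}" "u \<in> set P"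
    "\<And>a b R. (a, b, R) \<in> \<R> \<Longrightarrow> path_pts pos crv P \<inter> interior R = {}"
proof -
  obtain x where vu: "E v u" and ux: "E u x" and "x \<noteq> v" "\<not> E v x"
    using \<open>u \<in> N1 V E v\<close> unfolding N1_def nb_def cnb_def by auto
  have V: "v \<in> V" "u \<in> V" "x \<in> V"
    using vu ux edge_in_vertices edge_sym by blast+
  have neq: "v \<noteq> u" "u \<noteq> x"
    using vu ux edge_neq by blast+
  have avoid_vu: "path_image (crv v u) \<inter> interior R = {}"
    and avoid_ux: "path_image (crv u x) \<inter> interior R = {}" if "(a, b, R) \<in> \<R>" for a b R
    using edge_Int_interior_region[OF region_decompD(3)[OF rd that]] u_out[OF that]
      vu edge_sym[OF ux] edge_image_sym[OF ux] by auto
  show thesis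
  proof (cases "u \<in> D")
    case True
    show thesis
    proof (rule that[of u "[v, u]"])
      show "path_pts pos crv [v, u] \<inter> interior R = {}" if "(a, b, R) \<in> \<R>" for a b R
        using avoid_vu[OF that] by (simp add: path_pts_edge vu)
    qed (use True V neq vu in \<open>auto intro!: short_path_ConsI short_path_singleton\<close>)
  next
    case u_notin: False
    show thesis
    proof (cases "x \<in> D")
      case True
      show thesis
      proof (rule that[of x "[v, u, x]"])
        show "path_pts pos crv [v, u, x] \<inter> interior R = {}" if "(a, b, R) \<in> \<R>" for a b R
          using avoid_vu[OF that] avoid_ux[OF that]
          by (simp add: path_pts_Cons_edge path_pts_edge vu ux Int_Un_distrib2)
      qed (use True u_notin V neq \<open>x \<noteq> v\<close> vu ux
          in \<open>auto intro!: short_path_ConsI short_path_singleton\<close>)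
    next
      case x_notin: False
      have "pos x \<notin> interior R" if "(a, b, R) \<in> \<R>" for a b R
        using avoid_ux[OF that] pos_in_edge_image(2)[OF ux] by blast
      then obtain d where d: "d \<in> D" "E x d"
        and avoid_xd: "\<And>a b R. (a, b, R) \<in> \<R> \<Longrightarrow> path_image (crv x d) \<inter> interior R = {}"
        using edge_to_dominating_set_avoiding_regions[OF rd dom \<open>x \<in> V\<close> x_notin] by blast
      have d_new: "d \<in> V" "d \<noteq> v" "d \<noteq> u" "d \<noteq> x"
        using d u_notin \<open>\<not> E v x\<close> edge_in_vertices edge_sym edge_neq by blast+
      show thesis
      proof (rule that[of d "[v, u, x, d]"])
        show "path_pts pos crv [v, u, x, d] \<inter> interior R = {}" if "(a, b, R) \<in> \<R>" for a b R
          using avoid_vu[OF that] avoid_ux[OF that] avoid_xd[OF that]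
          by (simp add: path_pts_Cons_edge path_pts_edge vu ux d(2) Int_Un_distrib2)
      qed (use d d_new u_notin x_notin V neq \<open>x \<noteq> v\<close> vu ux
          in \<open>auto intro!: short_path_ConsI short_path_singleton\<close>)
    qed
  qed
qed

lemma N1_subset_decomp_verts:
  assumes dom: "dominating_set V E D" and max: "maximal_region_decomp V E pos crv D \<R>"
    and "v \<in> D"
  shows "N1 V E v \<subseteq> decomp_verts V pos \<R>"
proof
  fix u assume u: "u \<in> N1 V E v"
  show "u \<in> decomp_verts V pos \<R>"
  proof (rule ccontr)
    assume u_out: "u \<notin> decomp_verts V pos \<R>"
    have rd: "region_decomp V E pos crv D \<R>"
      using max by (simp add: maximal_region_decomp_def)
    have "u \<in> V"
      using u by (simp add: N1_def nb_def)
    with u_out have "pos u \<notin> R" if "(a, b, R) \<in> \<R>" for a b R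
      using that unfolding decomp_verts_def reg_verts_def by blast
    with N1_vertex_on_avoiding_short_path[OF rd dom \<open>v \<in> D\<close> u] obtain w P
      where "short_path V E v w P" "w \<in> D" "v \<noteq> w" "set P \<inter> D \<subseteq> {v, w}" "u \<in> set P"
        "\<And>a b R. (a, b, R) \<in> \<R> \<Longrightarrow> path_pts pos crv P \<inter> interior R = {}"
      by metis
    with short_path_subset_decomp_verts[OF max] \<open>v \<in> D\<close> u_out show False
      by blast
  qed
qed

end

theorem lemma6:
  fixes V :: "'a set" and E :: "'a \<Rightarrow> 'a \<Rightarrow> bool"
    and pos :: "'a \<Rightarrow> complex" and crv :: "'a \<Rightarrow> 'a \<Rightarrow> real \<Rightarrow> complex"
    and D :: "'a set" and \<R> :: "('a \<times> 'a \<times> complex set) set"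
  assumes "plane_graph V E pos crv"
    and "reduced V E"
    and "dominating_set V E D"
    and "maximal_region_decomp V E pos crv D \<R>"
    and "v \<in> D"
    and "u \<in> N1 V E v"
  shows "u \<in> decomp_verts V pos \<R>"
proof -
  interpret embedded_graph V E pos crv
    by (fact embedded_graph.intro[OF assms(1)])
  show ?thesis
    using N1_subset_decomp_verts[OF assms(3-5)] assms(6) by blast
qed

end
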